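(* Let $X$ be a metric space. Then no asymptotic cone of $X$ contains an isometric copy of the Riemannian circle of unit length if and only if $X$ does not approximate $n$-gons.
   Context: $S_n^0$ is the vertex set of the cycle graph $S_n$ of length $n$ (a Riemannian circle of length $n$ with $n$ equally spaced vertices) with the induced metric, and $\lambda S_n^0$ is it with the metric scaled by $\lambda>0$. $X$ approximates $n$-gons if for every $K>1$ and every $n\in\mathbb N$ there exist $K$-bilipschitz embeddings $\lambda S_n^0\to X$ for arbitrarily large $\lambda>0$. Asymptotic cone: for a nonprincipal ultrafilter $\mathscr U$ on $\mathbb N$, basepoints $b^{(m)}\in X$ and scalars $s^{(m)}>0$ with $s^{(m)}\to\infty$, take sequences $(x_m)$ with $d(x_m,b^{(m)})/s^{(m)}$ bounded, pseudometric $\lim_{\mathscr U}d(x_m,x'_m)/s^{(m)}$, and pass to the metric quotient. *)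

theory Defs
  imports "HOL-Analysis.Analysis"
begin

text \<open>Riemannian circle of length L, points parametrised by [0,L), intrinsic distance.\<close>
definition circle_dist :: "real \<Rightarrow> real \<Rightarrow> real \<Rightarrow> real" where
  "circle_dist L t t' = min \<bar>t - t'\<bar> (L - \<bar>t - t'\<bar>)"

text \<open>Vertex set S_n^0 = {0,...,n-1} of the cycle of length n (induced metric), scaled by lam.\<close>
definition ngon_dist :: "real \<Rightarrow> nat \<Rightarrow> nat \<Rightarrow> nat \<Rightarrow> real" where
  "ngon_dist lam n i j = lam * circle_dist (real n) (real i) (real j)"

definition bilip_ngon :: "'a::metric_space set \<Rightarrow> real \<Rightarrow> real \<Rightarrow> nat \<Rightarrow> (nat \<Rightarrow> 'a) \<Rightarrow> bool" where
  "bilip_ngon X K lam n f \<longleftrightarrow> (\<forall>i<n. f i \<in> X) \<and>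
     (\<forall>i<n. \<forall>j<n. ngon_dist lam n i j / K \<le> dist (f i) (f j)
                 \<and> dist (f i) (f j) \<le> K * ngon_dist lam n i j)"

definition approximates_ngons :: "'a::metric_space set \<Rightarrow> bool" where
  "approximates_ngons X \<longleftrightarrow> (\<forall>K>1. \<forall>n::nat. \<forall>M::real. \<exists>lam>M.
      \<exists>f. bilip_ngon X K lam n f)"

definition nonprincipal_ultrafilter :: "nat filter \<Rightarrow> bool" where
  "nonprincipal_ultrafilter U \<longleftrightarrow> U \<noteq> bot
     \<and> (\<forall>P. eventually P U \<or> eventually (\<lambda>m. \<not> P m) U)
     \<and> (\<forall>n. eventually (\<lambda>m. m \<noteq> n) U)"

definition ulim :: "nat filter \<Rightarrow> (nat \<Rightarrow> real) \<Rightarrow> real" where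
  "ulim U f = (THE L. (f \<longlongrightarrow> L) U)"

definition cone_seqs :: "'a::metric_space set \<Rightarrow> (nat \<Rightarrow> 'a) \<Rightarrow> (nat \<Rightarrow> real) \<Rightarrow> (nat \<Rightarrow> 'a) set" where
  "cone_seqs X b s = {x. (\<forall>m. x m \<in> X) \<and> (\<exists>C. \<forall>m. dist (x m) (b m) / s m \<le> C)}"

definition cone_pdist :: "nat filter \<Rightarrow> (nat \<Rightarrow> real) \<Rightarrow> (nat \<Rightarrow> 'a::metric_space) \<Rightarrow> (nat \<Rightarrow> 'a) \<Rightarrow> real" where
  "cone_pdist U s x y = ulim U (\<lambda>m. dist (x m) (y m) / s m)"

definition cone_points :: "'a::metric_space set \<Rightarrow> nat filter \<Rightarrow> (nat \<Rightarrow> 'a) \<Rightarrow> (nat \<Rightarrow> real) \<Rightarrow> (nat \<Rightarrow> 'a) set set" where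
  "cone_points X U b s = cone_seqs X b s //
     {(x, y). x \<in> cone_seqs X b s \<and> y \<in> cone_seqs X b s \<and> cone_pdist U s x y = 0}"

definition cone_dist :: "nat filter \<Rightarrow> (nat \<Rightarrow> real) \<Rightarrow> (nat \<Rightarrow> 'a::metric_space) set \<Rightarrow> (nat \<Rightarrow> 'a) set \<Rightarrow> real" where
  "cone_dist U s P Q = cone_pdist U s (SOME x. x \<in> P) (SOME y. y \<in> Q)"

definition cone_has_unit_circle :: "'a::metric_space set \<Rightarrow> nat filter \<Rightarrow> (nat \<Rightarrow> 'a) \<Rightarrow> (nat \<Rightarrow> real) \<Rightarrow> bool" where
  "cone_has_unit_circle X U b s \<longleftrightarrow> (\<exists>f. (\<forall>t\<in>{0..<1}. f t \<in> cone_points X U b s) \<and>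
      (\<forall>t\<in>{0..<1}. \<forall>t'\<in>{0..<1}. cone_dist U s (f t) (f t') = circle_dist 1 t t'))"

end

theory Submission
  imports Defs
begin

text \<open>
  If an asymptotic cone contains a unit circle, choose representative sequences of the
  points \<open>i/n\<close> of the circle. Their rescaled distances converge along the ultrafilter to the
  circle distances, which are positive for \<open>i \<noteq> j\<close>; so at a single index \<open>m\<close> where the
  scale \<open>s m\<close> is large they form a \<open>K\<close>-bilipschitz copy of \<open>(s m / n) S\<^sub>n\<^sup>0\<close>.
  Conversely, take \<open>K\<^sub>m\<close>-bilipschitz copies of the \<open>(m + 1)\<close>-gon scaled by \<open>\<lambda>\<^sub>m > m + 1\<close>,
  with \<open>K\<^sub>m \<rightarrow> 1\<close>, rescale by \<open>s\<^sub>m = \<lambda>\<^sub>m (m + 1)\<close> and send \<open>t \<in> [0,1)\<close> to the sequence of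
  images of the vertices \<open>\<lfloor>t (m + 1)\<rfloor>\<close>. The rescaled distances converge to the circle
  distance already along the cofinite filter, hence along every nonprincipal ultrafilter.
\<close>

section \<open>Nonprincipal ultrafilters and ultralimits\<close>

lemma ultrafilter_le_exists:
  fixes F :: "'a filter"
  assumes "F \<noteq> bot"
  obtains G where "G \<le> F" "G \<noteq> bot" "\<And>P. eventually P G \<or> eventually (\<lambda>x. \<not> P x) G"
proof -
  let ?A = "{G. G \<noteq> bot \<and> G \<le> F}"
  let ?finer = "\<lambda>G H :: 'a filter. H \<le> G"
  have "\<exists>M\<in>?A. \<forall>G\<in>?A. ?finer M G \<longrightarrow> G = M"
  proof (rule predicate_Zorn)
    show "partial_order_on ?A (relation_of ?finer ?A)"
      by (auto simp: partial_order_on_def preorder_on_def relation_of_def refl_on_def trans_def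
          antisym_def)
    fix C assume C: "C \<in> Chains (relation_of ?finer ?A)"
    then have C_sub: "C \<subseteq> ?A"
      and C_total: "\<And>G H. G \<in> C \<Longrightarrow> H \<in> C \<Longrightarrow> G \<le> H \<or> H \<le> G"
      by (auto simp: Chains_def relation_of_def)
    show "\<exists>U\<in>?A. \<forall>G\<in>C. ?finer G U"
    proof (cases "C = {}")
      case True
      then show ?thesis using assms by auto
    next
      case False
      have directed: "\<exists>K\<in>C. K \<le> inf G H" if "G \<in> C" "H \<in> C" for G H
        using C_total[OF that] that by (metis inf.absorb1 inf.absorb2 order_refl)
      have "Inf C \<noteq> bot"
      proof
        assume "Inf C = bot"
        then have "\<exists>G\<in>C. eventually (\<lambda>_. False) G"
          using eventually_Inf_base[OF False directed, of "\<lambda>_. False"] by simp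
        then show False using C_sub by (auto simp: trivial_limit_def)
      qed
      moreover have "Inf C \<le> F" using False C_sub by (auto intro: Inf_lower2)
      ultimately show ?thesis by (auto intro: Inf_lower)
    qed
  qed
  then obtain M where M: "M \<noteq> bot" "M \<le> F" and max: "\<And>G. G \<noteq> bot \<Longrightarrow> G \<le> M \<Longrightarrow> G = M"
    by (metis (mono_tags, lifting) mem_Collect_eq order_trans)
  have "eventually P M \<or> eventually (\<lambda>x. \<not> P x) M" for P
  proof (rule disjCI)
    assume "\<not> eventually (\<lambda>x. \<not> P x) M"
    then have "inf M (principal {x. P x}) \<noteq> bot"
      by (simp add: trivial_limit_def eventually_inf_principal)
    then have "inf M (principal {x. P x}) = M" by (rule max) simp
    moreover have "eventually P (inf M (principal {x. P x}))"
      by (simp add: eventually_inf_principal)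
    ultimately show "eventually P M" by simp
  qed
  with M that show thesis by blast
qed

lemma nonprincipal_ultrafilter_exists: "\<exists>U. nonprincipal_ultrafilter U"
proof -
  obtain U :: "nat filter" where U: "U \<le> sequentially" "U \<noteq> bot"
    "\<And>P. eventually P U \<or> eventually (\<lambda>x. \<not> P x) U"
    using ultrafilter_le_exists[OF sequentially_bot] by blast
  have "eventually (\<lambda>m. m \<noteq> n) U" for n
    using U(1) by (rule filter_leD) (auto intro: eventually_sequentiallyI[of "Suc n"])
  with U show ?thesis unfolding nonprincipal_ultrafilter_def by blast
qed

lemma nonprincipal_ultrafilter_le_sequentially:
  assumes "nonprincipal_ultrafilter U"
  shows "U \<le> sequentially"
  unfolding le_sequentially
proof
  fix N
  have "eventually (\<lambda>m. \<forall>n\<in>{..<N}. m \<noteq> n) U"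
    using assms by (intro eventually_ball_finite) (auto simp: nonprincipal_ultrafilter_def)
  then show "eventually (\<lambda>m. N \<le> m) U"
    by (rule eventually_mono) (use not_le in blast)
qed

lemma ultrafilter_tendsto_compact:
  assumes "compact S" and "U \<noteq> bot"
    and ultra: "\<And>P. eventually P U \<or> eventually (\<lambda>x. \<not> P x) U"
    and "eventually (\<lambda>x. f x \<in> S) U"
  obtains L where "L \<in> S" "(f \<longlongrightarrow> L) U"
proof -
  have "filtermap f U \<noteq> bot" "eventually (\<lambda>y. y \<in> S) (filtermap f U)"
    using assms by (simp_all add: filtermap_bot_iff eventually_filtermap)
  then obtain L where L: "L \<in> S" "inf (nhds L) (filtermap f U) \<noteq> bot"
    using \<open>compact S\<close> unfolding compact_filter by blast
  have "eventually (\<lambda>x. f x \<in> A) U" if "open A" "L \<in> A" for A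
  proof (rule ccontr)
    assume "\<not> eventually (\<lambda>x. f x \<in> A) U"
    then have "eventually (\<lambda>y. y \<notin> A) (filtermap f U)"
      using ultra by (auto simp: eventually_filtermap)
    moreover have "eventually (\<lambda>y. y \<in> A) (nhds L)"
      using that by (rule eventually_nhds_in_open)
    ultimately have "eventually (\<lambda>_. False) (inf (nhds L) (filtermap f U))"
      unfolding eventually_inf by blast
    with L(2) show False by (simp add: trivial_limit_def)
  qed
  with L(1) that show thesis unfolding tendsto_def by blast
qed

lemma ulim_eqI:
  assumes "nonprincipal_ultrafilter U" and "(f \<longlongrightarrow> L) U"
  shows "ulim U f = L"
  using assms tendsto_unique unfolding ulim_def nonprincipal_ultrafilter_def by blast

lemma tendsto_ulim:
  fixes f :: "nat \<Rightarrow> real"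
  assumes U: "nonprincipal_ultrafilter U" and bounded: "\<And>m. f m \<in> {a..b}"
  shows "(f \<longlongrightarrow> ulim U f) U"
proof -
  obtain L where "L \<in> {a..b}" "(f \<longlongrightarrow> L) U"
    by (rule ultrafilter_tendsto_compact[OF compact_Icc])
      (use U bounded in \<open>auto simp: nonprincipal_ultrafilter_def\<close>)
  with ulim_eqI[OF U] show ?thesis by simp
qed

section \<open>The asymptotic cone\<close>

lemma abs_dist_diff_le_dist_add:
  fixes x x' y y' :: "'a::metric_space"
  shows "\<bar>dist x' y' - dist x y\<bar> \<le> dist x x' + dist y y'"
  using dist_triangle[of x' y' x] dist_triangle[of x y' y] dist_triangle[of x y x'] dist_triangle[of x' y y']
  by (simp add: dist_commute abs_le_iff)

definition cone_rel :: "'a::metric_space set \<Rightarrow> nat filter \<Rightarrow> (nat \<Rightarrow> 'a) \<Rightarrow> (nat \<Rightarrow> real)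
    \<Rightarrow> ((nat \<Rightarrow> 'a) \<times> (nat \<Rightarrow> 'a)) set" where
  "cone_rel X U b s =
     {(x, y). x \<in> cone_seqs X b s \<and> y \<in> cone_seqs X b s \<and> cone_pdist U s x y = 0}"

lemma cone_points_eq_quotient: "cone_points X U b s = cone_seqs X b s // cone_rel X U b s"
  unfolding cone_points_def cone_rel_def ..

lemma tendsto_cone_pdist:
  assumes U: "nonprincipal_ultrafilter U" and s: "\<forall>m. s m > 0"
    and x: "x \<in> cone_seqs X b s" and y: "y \<in> cone_seqs X b s"
  shows "((\<lambda>m. dist (x m) (y m) / s m) \<longlongrightarrow> cone_pdist U s x y) U"
proof -
  obtain Cx Cy where Cx: "\<And>m. dist (x m) (b m) / s m \<le> Cx" and Cy: "\<And>m. dist (y m) (b m) / s m \<le> Cy"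
    using x y unfolding cone_seqs_def by blast
  have "dist (x m) (y m) / s m \<in> {0..Cx + Cy}" for m
  proof -
    have "dist (x m) (y m) / s m \<le> (dist (x m) (b m) + dist (y m) (b m)) / s m"
      using s by (simp add: divide_right_mono dist_triangle2 less_imp_le)
    with Cx[of m] Cy[of m] s[rule_format, of m] show ?thesis by (simp add: add_divide_distrib)
  qed
  then show ?thesis unfolding cone_pdist_def by (rule tendsto_ulim[OF U])
qed

lemma cone_pdist_self: "nonprincipal_ultrafilter U \<Longrightarrow> cone_pdist U s x x = 0"
  unfolding cone_pdist_def by (rule ulim_eqI) auto

lemma cone_pdist_cong:
  assumes U: "nonprincipal_ultrafilter U" and s: "\<forall>m. s m > 0"
    and seqs: "x \<in> cone_seqs X b s" "x' \<in> cone_seqs X b s" "y \<in> cone_seqs X b s" "y' \<in> cone_seqs X b s"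
    and x'_x: "cone_pdist U s x x' = 0" and y'_y: "cone_pdist U s y y' = 0"
  shows "cone_pdist U s x' y' = cone_pdist U s x y"
proof -
  let ?d = "\<lambda>x y m. dist (x m) (y m) / s m"
  have "((\<lambda>m. ?d x' y' m - ?d x y m) \<longlongrightarrow> 0) U"
  proof (rule Lim_null_comparison)
    show "((\<lambda>m. ?d x x' m + ?d y y' m) \<longlongrightarrow> 0) U"
      using tendsto_add[OF tendsto_cone_pdist[OF U s seqs(1,2)] tendsto_cone_pdist[OF U s seqs(3,4)]]
        x'_x y'_y by simp
    have "norm (?d x' y' m - ?d x y m) \<le> ?d x x' m + ?d y y' m" for m
    proof -
      have sm: "s m > 0" using s by blast
      have "norm (?d x' y' m - ?d x y m) = \<bar>dist (x' m) (y' m) - dist (x m) (y m)\<bar> / s m"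
        using sm by (simp add: diff_divide_distrib[symmetric])
      also have "\<dots> \<le> (dist (x m) (x' m) + dist (y m) (y' m)) / s m"
        using sm by (intro divide_right_mono abs_dist_diff_le_dist_add) simp
      finally show ?thesis by (simp add: add_divide_distrib)
    qed
    then show "eventually (\<lambda>m. norm (?d x' y' m - ?d x y m) \<le> ?d x x' m + ?d y y' m) U"
      by (intro always_eventually allI)
  qed
  then have "((\<lambda>m. ?d x' y' m) \<longlongrightarrow> cone_pdist U s x y) U"
    by (rule Lim_transform[OF tendsto_cone_pdist[OF U s seqs(1,3)]])
  then show ?thesis unfolding cone_pdist_def by (rule ulim_eqI[OF U])
qed

lemma cone_class_in_cone_points:
  "x \<in> cone_seqs X b s \<Longrightarrow> cone_rel X U b s `` {x} \<in> cone_points X U b s"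
  unfolding cone_points_eq_quotient by (rule quotientI)

lemma cone_class_some_rep:
  assumes "nonprincipal_ultrafilter U" and "x \<in> cone_seqs X b s"
  defines "y \<equiv> SOME y. y \<in> cone_rel X U b s `` {x}"
  shows "y \<in> cone_seqs X b s" "cone_pdist U s x y = 0"
proof -
  have "x \<in> cone_rel X U b s `` {x}"
    using assms cone_pdist_self by (auto simp: cone_rel_def)
  then have "y \<in> cone_rel X U b s `` {x}"
    unfolding y_def by (rule someI[where P = "\<lambda>y. y \<in> cone_rel X U b s `` {x}"])
  then show "y \<in> cone_seqs X b s" "cone_pdist U s x y = 0"
    by (auto simp: cone_rel_def)
qed

lemma cone_dist_class:
  assumes U: "nonprincipal_ultrafilter U" and s: "\<forall>m. s m > 0"
    and x: "x \<in> cone_seqs X b s" and y: "y \<in> cone_seqs X b s"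
  shows "cone_dist U s (cone_rel X U b s `` {x}) (cone_rel X U b s `` {y}) = cone_pdist U s x y"
  unfolding cone_dist_def
  using cone_pdist_cong[OF U s x _ y] cone_class_some_rep[OF U x] cone_class_some_rep[OF U y] by blast

lemma cone_points_some_in_cone_seqs:
  assumes U: "nonprincipal_ultrafilter U" and "P \<in> cone_points X U b s"
  shows "(SOME x. x \<in> P) \<in> cone_seqs X b s"
proof -
  obtain x where "x \<in> cone_seqs X b s" "P = cone_rel X U b s `` {x}"
    using assms(2) unfolding cone_points_eq_quotient by (rule quotientE)
  with cone_class_some_rep(1)[OF U] show ?thesis by simp
qed

lemma cone_has_unit_circleI:
  assumes U: "nonprincipal_ultrafilter U" and s: "\<forall>m. s m > 0"
    and seqs: "\<And>t. t \<in> {0..<1} \<Longrightarrow> x t \<in> cone_seqs X b s"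
    and lim: "\<And>t t'. t \<in> {0..<1} \<Longrightarrow> t' \<in> {0..<1} \<Longrightarrow>
      ((\<lambda>m. dist (x t m) (x t' m) / s m) \<longlongrightarrow> circle_dist 1 t t') U"
  shows "cone_has_unit_circle X U b s"
  unfolding cone_has_unit_circle_def
proof (intro exI conjI ballI)
  fix t t' :: real assume t: "t \<in> {0..<1}" and t': "t' \<in> {0..<1}"
  show "cone_rel X U b s `` {x t} \<in> cone_points X U b s"
    by (rule cone_class_in_cone_points[OF seqs[OF t]])
  have "cone_pdist U s (x t) (x t') = circle_dist 1 t t'"
    unfolding cone_pdist_def by (rule ulim_eqI[OF U lim[OF t t']])
  then show "cone_dist U s (cone_rel X U b s `` {x t}) (cone_rel X U b s `` {x t'}) = circle_dist 1 t t'"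
    using cone_dist_class[OF U s seqs[OF t] seqs[OF t']] by simp
qed

section \<open>Distances on the circle and on polygons\<close>

lemma circle_dist_scale:
  assumes "L > 0"
  shows "circle_dist L a b = L * circle_dist 1 (a / L) (b / L)"
proof -
  have "\<bar>a / L - b / L\<bar> = \<bar>a - b\<bar> / L"
    using assms by (simp add: diff_divide_distrib[symmetric])
  with assms show ?thesis
    unfolding circle_dist_def by (simp add: min_mult_distrib_left algebra_simps)
qed

lemma circle_dist_nonneg: "t \<in> {0..<L} \<Longrightarrow> t' \<in> {0..<L} \<Longrightarrow> 0 \<le> circle_dist L t t'"
  unfolding circle_dist_def by auto

lemma circle_dist_le_half: "circle_dist L a b \<le> L / 2"
  unfolding circle_dist_def by linarith

lemma circle_dist_pos:
  "t \<in> {0..<L} \<Longrightarrow> t' \<in> {0..<L} \<Longrightarrow> t \<noteq> t' \<Longrightarrow> 0 < circle_dist L t t'"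
  unfolding circle_dist_def by auto

lemma abs_circle_dist_diff_le:
  "\<bar>circle_dist L a b - circle_dist L a' b'\<bar> \<le> \<bar>a - a'\<bar> + \<bar>b - b'\<bar>"
  unfolding circle_dist_def by (simp add: min_def abs_if)

lemma ngon_dist_eq_circle_dist:
  assumes "n > 0"
  shows "ngon_dist lam n i j = lam * real n * circle_dist 1 (real i / real n) (real j / real n)"
  unfolding ngon_dist_def using circle_dist_scale[of "real n" "real i" "real j"] assms by simp

lemma real_of_nat_div_in_unit_interval: "i < n \<Longrightarrow> real i / real n \<in> {0..<1}"
  by simp

definition ngon_vertex :: "nat \<Rightarrow> real \<Rightarrow> nat" where
  "ngon_vertex n t = nat \<lfloor>t * real n\<rfloor>"

lemma ngon_vertex_zero [simp]: "ngon_vertex n 0 = 0"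
  by (simp add: ngon_vertex_def)

lemma ngon_vertex_less: "t \<in> {0..<1} \<Longrightarrow> n > 0 \<Longrightarrow> ngon_vertex n t < n"
  unfolding ngon_vertex_def by (simp add: nat_less_iff floor_less_iff)

lemma ngon_vertex_approx:
  assumes "t \<ge> 0" and "n > 0"
  shows "\<bar>real (ngon_vertex n t) / real n - t\<bar> \<le> 1 / real n"
proof -
  have "real (ngon_vertex n t) = of_int \<lfloor>t * real n\<rfloor>"
    using assms by (simp add: ngon_vertex_def)
  then have "\<bar>real (ngon_vertex n t) - t * real n\<bar> \<le> 1"
    by linarith
  moreover have "real (ngon_vertex n t) / real n - t = (real (ngon_vertex n t) - t * real n) / real n"
    using assms by (simp add: field_simps)
  ultimately show ?thesis
    using assms by (simp add: abs_divide divide_right_mono)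
qed

lemma abs_sub_le_of_ratio_bounds:
  fixes c d K :: real
  assumes "K \<ge> 1" "0 \<le> c" "c \<le> 1 / 2" "c / K \<le> d" "d \<le> K * c"
  shows "\<bar>d - c\<bar> \<le> (K - 1) / 2"
proof -
  have "c - c / K = (K - 1) * c / K"
    using assms by (simp add: field_simps)
  also have "\<dots> \<le> (K - 1) * c"
    using assms divide_left_mono[of 1 K "(K - 1) * c"] by simp
  finally have "c - d \<le> (K - 1) * c"
    using assms by linarith
  moreover have "d - c \<le> (K - 1) * c"
    using assms by (simp add: algebra_simps)
  moreover have "(K - 1) * c \<le> (K - 1) / 2"
    using assms mult_left_mono[of c "1 / 2" "K - 1"] by simp
  ultimately show ?thesis by linarith
qed

section \<open>Circles in asymptotic cones and bilipschitz polygons\<close>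

lemma bilip_ngon_vertex_dist:
  assumes f: "bilip_ngon X K lam n f" and K: "K \<ge> 1" and lam: "lam > 0" and n: "n > 0"
    and t: "t \<in> {0..<1}" and t': "t' \<in> {0..<1}"
  shows "\<bar>dist (f (ngon_vertex n t)) (f (ngon_vertex n t')) / (lam * n) - circle_dist 1 t t'\<bar>
           \<le> (K - 1) / 2 + 2 / n"
proof -
  define i j where "i = ngon_vertex n t" and "j = ngon_vertex n t'"
  define c where "c = circle_dist 1 (real i / real n) (real j / real n)"
  define d where "d = dist (f i) (f j) / (lam * n)"
  have ij: "i < n" "j < n"
    using ngon_vertex_less t t' n by (simp_all add: i_def j_def)
  have "0 \<le> c"
    unfolding c_def using ij by (intro circle_dist_nonneg real_of_nat_div_in_unit_interval)
  moreover have "c \<le> 1 / 2"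
    unfolding c_def using circle_dist_le_half by simp
  moreover have "c / K \<le> d" "d \<le> K * c"
    using f ij lam n unfolding bilip_ngon_def ngon_dist_eq_circle_dist[OF n] c_def d_def
    by (auto simp: field_simps)
  ultimately have "\<bar>d - c\<bar> \<le> (K - 1) / 2"
    using K by (intro abs_sub_le_of_ratio_bounds)
  moreover have "\<bar>c - circle_dist 1 t t'\<bar> \<le> 2 / n"
    using abs_circle_dist_diff_le[of 1 "real i / real n" "real j / real n" t t']
      ngon_vertex_approx[of t n] ngon_vertex_approx[of t' n] t t' n
    unfolding c_def i_def j_def by simp
  ultimately show ?thesis
    unfolding d_def i_def j_def by linarith
qed

lemma eventually_bilip_ngon:
  fixes x :: "nat \<Rightarrow> 'b \<Rightarrow> 'a::metric_space"
  assumes K: "K > 1" and X: "\<And>i m. i < n \<Longrightarrow> x i m \<in> X" and s: "\<And>m. s m > 0"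
    and lim: "\<And>i j. i < n \<Longrightarrow> j < n \<Longrightarrow>
      ((\<lambda>m. dist (x i m) (x j m) / s m) \<longlongrightarrow> circle_dist 1 (real i / real n) (real j / real n)) F"
  shows "eventually (\<lambda>m. bilip_ngon X K (s m / real n) n (\<lambda>i. x i m)) F"
proof (cases "n = 0")
  case True
  then show ?thesis by (simp add: bilip_ngon_def)
next
  case False
  let ?ngon = "\<lambda>m i j. ngon_dist (s m / real n) n i j"
  have pair: "eventually (\<lambda>m. ?ngon m i j / K \<le> dist (x i m) (x j m)
      \<and> dist (x i m) (x j m) \<le> K * ?ngon m i j) F" if ij: "i < n" "j < n" for i j
  proof (cases "i = j")
    case True
    then show ?thesis by (simp add: ngon_dist_def circle_dist_def)
  next
    case False
    let ?c = "circle_dist 1 (real i / real n) (real j / real n)"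
    have "?c > 0"
      using ij[THEN real_of_nat_div_in_unit_interval] \<open>i \<noteq> j\<close> \<open>n \<noteq> 0\<close>
      by (intro circle_dist_pos) auto
    with K have "?c / K < ?c" "?c < K * ?c"
      by (simp_all add: divide_less_eq)
    then have "eventually (\<lambda>m. ?c / K < dist (x i m) (x j m) / s m \<and> dist (x i m) (x j m) / s m < K * ?c) F"
      using lim[OF ij] by (intro eventually_conj order_tendstoD)
    then show ?thesis
    proof (rule eventually_mono)
      fix m
      have "?ngon m i j = s m * ?c"
        using \<open>n \<noteq> 0\<close> by (simp add: ngon_dist_eq_circle_dist)
      then show "?c / K < dist (x i m) (x j m) / s m \<and> dist (x i m) (x j m) / s m < K * ?c \<Longrightarrow>
          ?ngon m i j / K \<le> dist (x i m) (x j m) \<and> dist (x i m) (x j m) \<le> K * ?ngon m i j"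
        using s[of m] K by (simp add: field_simps)
    qed
  qed
  have "eventually (\<lambda>m. \<forall>i\<in>{..<n}. \<forall>j\<in>{..<n}. ?ngon m i j / K \<le> dist (x i m) (x j m)
      \<and> dist (x i m) (x j m) \<le> K * ?ngon m i j) F"
    using pair by (simp add: eventually_ball_finite)
  then show ?thesis
    by (rule eventually_mono) (simp add: bilip_ngon_def X)
qed

lemma cone_has_unit_circle_imp_approximates_ngons:
  assumes U: "nonprincipal_ultrafilter U" and s: "\<forall>m. s m > 0"
    and s_lim: "filterlim s at_top sequentially" and circle: "cone_has_unit_circle X U b s"
  shows "approximates_ngons X"
  unfolding approximates_ngons_def
proof (intro allI impI)
  fix K M :: real and n :: nat
  assume K: "K > 1"
  obtain F where F: "\<And>t. t \<in> {0..<1} \<Longrightarrow> F t \<in> cone_points X U b s"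
    and F_dist: "\<And>t t'. t \<in> {0..<1} \<Longrightarrow> t' \<in> {0..<1} \<Longrightarrow>
      cone_dist U s (F t) (F t') = circle_dist 1 t t'"
    using circle unfolding cone_has_unit_circle_def by blast
  define x where "x i = (SOME y. y \<in> F (real i / real n))" for i
  have seqs: "x i \<in> cone_seqs X b s" if "i < n" for i
    unfolding x_def using U F[OF real_of_nat_div_in_unit_interval[OF that]]
    by (rule cone_points_some_in_cone_seqs)
  have "eventually (\<lambda>m. bilip_ngon X K (s m / real n) n (\<lambda>i. x i m)) U"
  proof (rule eventually_bilip_ngon[OF K])
    show "x i m \<in> X" if "i < n" for i m
      using seqs[OF that] by (simp add: cone_seqs_def)
    show "((\<lambda>m. dist (x i m) (x j m) / s m)
        \<longlongrightarrow> circle_dist 1 (real i / real n) (real j / real n)) U"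
      if "i < n" "j < n" for i j
      using tendsto_cone_pdist[OF U s seqs[OF that(1)] seqs[OF that(2)]]
        F_dist[OF that[THEN real_of_nat_div_in_unit_interval]]
      by (simp add: cone_dist_def x_def)
  qed (use s in blast)
  moreover have "eventually (\<lambda>m. M * real n < s m) U"
    using filterlim_mono[OF s_lim order_refl nonprincipal_ultrafilter_le_sequentially[OF U]]
    by (simp add: filterlim_at_top_dense)
  ultimately have "eventually (\<lambda>m. bilip_ngon X K (s m / real n) n (\<lambda>i. x i m) \<and> M * real n < s m) U"
    by (rule eventually_conj)
  moreover have "U \<noteq> bot"
    using U by (simp add: nonprincipal_ultrafilter_def)
  ultimately obtain m where m: "bilip_ngon X K (s m / real n) n (\<lambda>i. x i m)" "M * real n < s m"
    using eventually_happens' by blast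
  show "\<exists>lam>M. \<exists>f. bilip_ngon X K lam n f"
  proof (cases "n = 0")
    case True
    \<comment> \<open>here \<open>s m / real n = 0\<close>, so the empty polygon needs its own scale\<close>
    then show ?thesis by (intro exI[of _ "M + 1"]) (auto simp: bilip_ngon_def)
  next
    case False
    with m show ?thesis by (intro exI[of _ "s m / real n"]) (auto simp: less_divide_eq)
  qed
qed

lemma approximates_ngons_imp_cone_has_unit_circle:
  assumes "approximates_ngons X"
  obtains U b s where "nonprincipal_ultrafilter U" "\<forall>m. b m \<in> X" "\<forall>m. s m > 0"
    "filterlim s at_top sequentially" "cone_has_unit_circle X U b s"
proof -
  obtain U where U: "nonprincipal_ultrafilter U"
    using nonprincipal_ultrafilter_exists by blast
  define K where "K m = 1 + 2 / real (Suc m)" for m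
  have "\<forall>m. \<exists>lam g. lam > real (Suc m) \<and> bilip_ngon X (K m) lam (Suc m) g"
    using assms unfolding approximates_ngons_def K_def by simp
  then obtain lam g where lam: "\<And>m. lam m > real (Suc m)"
    and g: "\<And>m. bilip_ngon X (K m) (lam m) (Suc m) (g m)"
    by metis
  define s where "s m = lam m * real (Suc m)" for m
  define b where "b m = g m 0" for m
  define x where "x t m = g m (ngon_vertex (Suc m) t)" for t m
  have lam_pos: "lam m > 0" for m
    using lam[of m] by linarith
  have s_pos: "\<forall>m. s m > 0"
    using lam_pos by (simp add: s_def)
  have close: "\<bar>dist (x t m) (x t' m) / s m - circle_dist 1 t t'\<bar> \<le> 3 / real (Suc m)"
    if "t \<in> {0..<1}" "t' \<in> {0..<1}" for t t' m
  proof -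
    have "\<bar>dist (x t m) (x t' m) / s m - circle_dist 1 t t'\<bar> \<le> (K m - 1) / 2 + 2 / real (Suc m)"
      unfolding x_def s_def
      by (rule bilip_ngon_vertex_dist[OF g _ lam_pos _ that]) (simp_all add: K_def)
    also have "\<dots> = 3 / real (Suc m)"
      by (simp add: K_def add_divide_distrib[symmetric] del: of_nat_Suc)
    finally show ?thesis .
  qed
  have seqs: "x t \<in> cone_seqs X b s" if t: "t \<in> {0..<1}" for t
    unfolding cone_seqs_def
  proof (intro CollectI conjI exI allI)
    show "x t m \<in> X" for m
      using g[of m] ngon_vertex_less[OF t] unfolding bilip_ngon_def x_def by simp
    show "dist (x t m) (b m) / s m \<le> 4" for m
    proof -
      have "b m = x 0 m" by (simp add: b_def x_def)
      then have "dist (x t m) (b m) / s m \<le> circle_dist 1 t 0 + 3 / real (Suc m)"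
        using close[OF t, of 0 m] by simp
      also have "\<dots> \<le> 4"
      proof -
        have "3 / real (Suc m) \<le> 3"
          by (simp add: divide_le_eq del: of_nat_Suc)
        with circle_dist_le_half[of 1 t 0] show ?thesis by linarith
      qed
      finally show ?thesis .
    qed
  qed
  have lim: "((\<lambda>m. dist (x t m) (x t' m) / s m) \<longlongrightarrow> circle_dist 1 t t') sequentially"
    if "t \<in> {0..<1}" "t' \<in> {0..<1}" for t t'
  proof -
    have "(\<lambda>m. 3 / real (Suc m)) \<longlonglongrightarrow> 0"
      by (rule LIMSEQ_Suc[OF lim_const_over_n])
    then have "(\<lambda>m. dist (x t m) (x t' m) / s m - circle_dist 1 t t') \<longlonglongrightarrow> 0"
      by (rule Lim_null_comparison[rotated]) (use close[OF that] in \<open>simp del: of_nat_Suc\<close>)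
    then show ?thesis by (simp add: LIM_zero_iff)
  qed
  have "filterlim s at_top sequentially"
  proof (rule filterlim_at_top_mono[OF filterlim_real_sequentially])
    have "real m \<le> s m" for m
    proof -
      have "real m \<le> lam m"
        using lam[of m] by simp
      also have "\<dots> \<le> s m"
        using lam_pos[of m] by (simp add: s_def)
      finally show ?thesis .
    qed
    then show "eventually (\<lambda>m. real m \<le> s m) sequentially" by simp
  qed
  moreover have "cone_has_unit_circle X U b s"
    using U s_pos seqs
      tendsto_mono[OF nonprincipal_ultrafilter_le_sequentially[OF U] lim]
    by (rule cone_has_unit_circleI)
  moreover have "\<forall>m. b m \<in> X"
    using g unfolding bilip_ngon_def b_def by simp
  ultimately show thesis
    using that U s_pos by blast
qed

theorem corollary3p8:
  fixes X :: "'a::metric_space set"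
  shows "(\<forall>U b s. nonprincipal_ultrafilter U \<and> (\<forall>m. b m \<in> X) \<and> (\<forall>m. s m > 0)
            \<and> filterlim s at_top sequentially \<longrightarrow> \<not> cone_has_unit_circle X U b s)
         \<longleftrightarrow> \<not> approximates_ngons X"
  using cone_has_unit_circle_imp_approximates_ngons approximates_ngons_imp_cone_has_unit_circle
  by metis

end
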